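(* There is a constant $c>0$ such that the following holds for all $n\ge 1$. Let $q,t_1,\dots,t_n$ be $n+1$ distinct qubits, and for each $i$ let $U_i$ be an arbitrary $2\times 2$ unitary and $G_i$ the controlled-$U_i$ gate with control qubit $q$ and target qubit $t_i$. Then the operator $G_nG_{n-1}\cdots G_1$ can be embedded, using at most $cn$ ancillae, in a quantum circuit of depth at most $c\log n$ (for $n\ge 2$).
   Context: Qubits have computational basis $|0\rangle,|1\rangle$. For a $2\times 2$ unitary $U$, the controlled-$U$ gate on (control, target) is the $4\times4$ unitary $\begin{pmatrix}I&0\\0&U\end{pmatrix}$, i.e. it applies $U$ to the target when the control is $|1\rangle$. A one-layer circuit is a tensor product of arbitrary one-qubit and two-qubit unitary gates acting on pairwise disjoint sets of qubits (each qubit interacts with at most one gate); a circuit of depth $k$ is a product of $k$ one-layer circuits. An operator $F$ on $n'$ qubits is embedded in an operator $M$ on $n'+m$ qubits using $m$ ancillae if $M$ maps the subspace where the $m$ ancilla qubits are all $|0\rangle$ into itself and on that subspace equals $F\otimes\mathbf 1$, i.e. $M(|\psi\rangle\otimes|0\cdots0\rangle)=(F|\psi\rangle)\otimes|0\cdots0\rangle$ for all $|\psi\rangle$. *)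

theory Defs
  imports Complex_Main
begin

text \<open>Qubits are natural numbers; an N-qubit system uses qubits {0..<N}.
  A computational basis state of a set S of qubits is the subset of S of qubits in state |1>.
  An operator on qubit set S is a matrix indexed by basis states (subsets of S).\<close>

type_synonym qop = "nat set \<Rightarrow> nat set \<Rightarrow> complex"

text \<open>2x2 matrices indexed by bits (False = |0>, True = |1>); unitarity U U^dagger = I.\<close>
definition unitary2 :: "(bool \<Rightarrow> bool \<Rightarrow> complex) \<Rightarrow> bool" where
  "unitary2 U \<longleftrightarrow> (\<forall>a b. (\<Sum>c\<in>UNIV. U a c * cnj (U b c)) = (if a = b then 1 else 0))"

definition unitary_on :: "nat set \<Rightarrow> qop \<Rightarrow> bool" where
  "unitary_on S g \<longleftrightarrow> (\<forall>x\<subseteq>S. \<forall>y\<subseteq>S.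
      (\<Sum>z\<in>Pow S. g x z * cnj (g y z)) = (if x = y then 1 else 0))"

definition qid :: qop where
  "qid x y = (if x = y then 1 else 0)"

definition qmult :: "nat \<Rightarrow> qop \<Rightarrow> qop \<Rightarrow> qop" where
  "qmult N A B x y = (\<Sum>z\<in>Pow {0..<N}. A x z * B z y)"

text \<open>One-layer circuit on N qubits: tensor product of one- and two-qubit unitary gates
  on pairwise disjoint blocks (idle qubits are covered by identity one-qubit gates).\<close>
definition is_layer :: "nat \<Rightarrow> qop \<Rightarrow> bool" where
  "is_layer N L \<longleftrightarrow> (\<exists>P g.
      (\<forall>S\<in>P. S \<subseteq> {0..<N} \<and> (card S = 1 \<or> card S = 2) \<and> unitary_on S (g S)) \<and>
      (\<forall>S\<in>P. \<forall>T\<in>P. S \<noteq> T \<longrightarrow> S \<inter> T = {}) \<and>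
      \<Union>P = {0..<N} \<and>
      (\<forall>x\<subseteq>{0..<N}. \<forall>y\<subseteq>{0..<N}. L x y = (\<Prod>S\<in>P. g S (x \<inter> S) (y \<inter> S))))"

fun circuit :: "nat \<Rightarrow> nat \<Rightarrow> qop \<Rightarrow> bool" where
  "circuit N 0 M \<longleftrightarrow> (\<forall>x\<subseteq>{0..<N}. \<forall>y\<subseteq>{0..<N}. M x y = qid x y)"
| "circuit N (Suc k) M \<longleftrightarrow> (\<exists>L M'. is_layer N L \<and> circuit N k M' \<and>
      (\<forall>x\<subseteq>{0..<N}. \<forall>y\<subseteq>{0..<N}. M x y = qmult N L M' x y))"

definition ctrl_gate :: "nat \<Rightarrow> nat \<Rightarrow> (bool \<Rightarrow> bool \<Rightarrow> complex) \<Rightarrow> qop" where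
  "ctrl_gate c t U x y =
     (if c \<in> y then (if x - {t} = y - {t} then U (t \<in> x) (t \<in> y) else 0)
      else qid x y)"

fun ctrl_prod :: "nat \<Rightarrow> (nat \<Rightarrow> bool \<Rightarrow> bool \<Rightarrow> complex) \<Rightarrow> nat \<Rightarrow> qop" where
  "ctrl_prod N U 0 = qid"
| "ctrl_prod N U (Suc k) = qmult N (ctrl_gate 0 (Suc k) (U (Suc k))) (ctrl_prod N U k)"

text \<open>F on qubits {0..<n'} is embedded in M on {0..<n'+m} using the m ancillae n',...,n'+m-1:
  M(|psi> (x) |0..0>) = (F|psi>) (x) |0..0>, checked on basis columns.\<close>
definition embeds :: "nat \<Rightarrow> nat \<Rightarrow> qop \<Rightarrow> qop \<Rightarrow> bool" where
  "embeds n' m F M \<longleftrightarrow> (\<forall>x\<subseteq>{0..<n'+m}. \<forall>y\<subseteq>{0..<n'}.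
      M x y = (if x \<subseteq> {0..<n'} then F x y else 0))"

end

(* Qubit 0 is the control, qubits 1..n are the targets and n+1..2n the ancillas.  A fan-out
   of J = floor(log2 n) + 1 layers of CNOT gates copies the control bit into all ancillas, each
   layer doubling the number of copies.  One further layer applies all controlled-U_i at once,
   the i-th one controlled by its own copy n+i, and then the fan-out is undone.  The fan-out
   layers permute basis states, so the circuit is the controlled layer conjugated by the fan-out
   permutation; on inputs whose ancillas are |0> it therefore acts as G_n ... G_1.  This uses
   n ancillas and depth 2J + 1 <= 5 log2 n. *)

theory Submission
  imports Defs "HOL-Library.Discrete_Functions"
begin

section \<open>Basis permutations and one-layer circuits\<close>

definition perm_op :: "(nat set \<Rightarrow> nat set) \<Rightarrow> qop" where
  "perm_op \<sigma> x y = (if x = \<sigma> y then 1 else 0)"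

lemma qid_eq_perm_op_id: "qid = perm_op id"
  by (simp add: fun_eq_iff qid_def perm_op_def)

lemma qmult_single_term:
  assumes "w \<subseteq> {0..<N}" and "\<And>z. z \<subseteq> {0..<N} \<Longrightarrow> z \<noteq> w \<Longrightarrow> A x z * B z y = 0"
  shows "qmult N A B x y = A x w * B w y"
  unfolding qmult_def using assms by (subst sum.mono_neutral_right[of _ "{w}"]) auto

lemma circuit_foldr_qmult:
  assumes "\<forall>L\<in>set Ls. is_layer N L"
  shows "circuit N (length Ls) (foldr (qmult N) Ls qid)"
  using assms by (induction Ls) auto

lemma prod_block_indicator:
  assumes "finite I" and cover: "(\<Union>i\<in>I. blk i) = {0..<N}"
    and "x \<subseteq> {0..<N}" "y \<subseteq> {0..<N}"
  shows "(\<Prod>i\<in>I. if x \<inter> blk i = y \<inter> blk i then 1 else 0 :: complex) = (if x = y then 1 else 0)"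
proof -
  have "(\<forall>i\<in>I. x \<inter> blk i = y \<inter> blk i) \<longleftrightarrow> x = y"
    using assms by blast
  then show ?thesis
    using \<open>finite I\<close> by (auto simp: prod_zero_iff intro: prod.neutral)
qed

lemma is_layerI:
  fixes blk :: "'i \<Rightarrow> nat set" and g :: "'i \<Rightarrow> qop"
  assumes disjoint: "\<And>i j. i \<in> I \<Longrightarrow> j \<in> I \<Longrightarrow> i \<noteq> j \<Longrightarrow> blk i \<inter> blk j = {}"
    and cover: "(\<Union>i\<in>I. blk i) = {0..<N}"
    and size: "\<And>i. i \<in> I \<Longrightarrow> card (blk i) = 1 \<or> card (blk i) = 2"
    and unitary: "\<And>i. i \<in> I \<Longrightarrow> unitary_on (blk i) (g i)"
    and L: "\<And>x y. x \<subseteq> {0..<N} \<Longrightarrow> y \<subseteq> {0..<N} \<Longrightarrow>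
              L x y = (\<Prod>i\<in>I. g i (x \<inter> blk i) (y \<inter> blk i))"
  shows "is_layer N L"
proof -
  have "blk i \<noteq> {}" if "i \<in> I" for i
    using size[OF that] by auto
  then have inj: "inj_on blk I"
    using disjoint by (metis inf.idem inj_onI)
  define g' where "g' S = g (the_inv_into I blk S)" for S
  have g': "g' (blk i) = g i" if "i \<in> I" for i
    using inj that by (simp add: g'_def the_inv_into_f_f)
  show ?thesis
    unfolding is_layer_def
  proof (intro exI[of _ "blk ` I"] exI[of _ g'] conjI)
    show "\<forall>S\<in>blk ` I. S \<subseteq> {0..<N} \<and> (card S = 1 \<or> card S = 2) \<and> unitary_on S (g' S)"
      using cover size unitary g' by auto
  next
    show "\<forall>S\<in>blk ` I. \<forall>T\<in>blk ` I. S \<noteq> T \<longrightarrow> S \<inter> T = {}"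
      using disjoint by blast
  next
    show "\<Union> (blk ` I) = {0..<N}"
      by (rule cover)
  next
    show "\<forall>x\<subseteq>{0..<N}. \<forall>y\<subseteq>{0..<N}. L x y = (\<Prod>S\<in>blk ` I. g' S (x \<inter> S) (y \<inter> S))"
      using L g' by (simp add: prod.reindex[OF inj])
  qed
qed

lemma unitary_on_perm_op:
  assumes "finite S" and "\<And>z. z \<subseteq> S \<Longrightarrow> \<sigma> z \<subseteq> S" and "\<And>z. z \<subseteq> S \<Longrightarrow> \<sigma> (\<sigma> z) = z"
  shows "unitary_on S (perm_op \<sigma>)"
  unfolding unitary_on_def
proof (intro allI impI)
  fix x y assume "x \<subseteq> S" "y \<subseteq> S"
  have "(\<Sum>z\<in>Pow S. perm_op \<sigma> x z * cnj (perm_op \<sigma> y z))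
      = (\<Sum>z\<in>Pow S. if z = \<sigma> x then (if x = y then 1 else 0) else 0)"
    using \<open>x \<subseteq> S\<close> \<open>y \<subseteq> S\<close> assms(3) by (intro sum.cong) (auto simp: perm_op_def)
  also have "\<dots> = (if x = y then 1 else 0)"
    using assms \<open>x \<subseteq> S\<close> by simp
  finally show "(\<Sum>z\<in>Pow S. perm_op \<sigma> x z * cnj (perm_op \<sigma> y z)) = (if x = y then 1 else 0)" .
qed

definition basis_involution :: "nat \<Rightarrow> (nat set \<Rightarrow> nat set) \<Rightarrow> bool" where
  "basis_involution N \<sigma> \<longleftrightarrow> (\<forall>y \<subseteq> {0..<N}. \<sigma> y \<subseteq> {0..<N}) \<and> (\<forall>y. \<sigma> (\<sigma> y) = y)"

lemma is_layer_perm_op: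
  fixes blk :: "'i \<Rightarrow> nat set"
  assumes "finite I"
    and disjoint: "\<And>i j. i \<in> I \<Longrightarrow> j \<in> I \<Longrightarrow> i \<noteq> j \<Longrightarrow> blk i \<inter> blk j = {}"
    and cover: "(\<Union>i\<in>I. blk i) = {0..<N}"
    and size: "\<And>i. i \<in> I \<Longrightarrow> card (blk i) = 1 \<or> card (blk i) = 2"
    and "basis_involution N \<sigma>"
    and blockwise: "\<And>i y. i \<in> I \<Longrightarrow> y \<subseteq> {0..<N} \<Longrightarrow> \<sigma> y \<inter> blk i = \<sigma> (y \<inter> blk i) \<inter> blk i"
  shows "is_layer N (perm_op \<sigma>)"
proof (rule is_layerI[where g = "\<lambda>i. perm_op (\<lambda>z. \<sigma> z \<inter> blk i)"])
  have closed: "\<And>y. y \<subseteq> {0..<N} \<Longrightarrow> \<sigma> y \<subseteq> {0..<N}" and involutive: "\<And>y. \<sigma> (\<sigma> y) = y"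
    using \<open>basis_involution N \<sigma>\<close> by (auto simp: basis_involution_def)
  fix i assume i: "i \<in> I"
  have "blk i \<subseteq> {0..<N}"
    using cover i by blast
  then have "\<sigma> (\<sigma> z \<inter> blk i) \<inter> blk i = z" if "z \<subseteq> blk i" for z
    using blockwise[OF i, of "\<sigma> z"] closed[of z] involutive that by auto
  moreover have "finite (blk i)"
    using size[OF i] card.infinite by fastforce
  ultimately show "unitary_on (blk i) (perm_op (\<lambda>z. \<sigma> z \<inter> blk i))"
    by (intro unitary_on_perm_op) auto
next
  fix x y assume x: "x \<subseteq> {0..<N}" and y: "y \<subseteq> {0..<N}"
  have "(\<Prod>i\<in>I. perm_op (\<lambda>z. \<sigma> z \<inter> blk i) (x \<inter> blk i) (y \<inter> blk i))
      = (\<Prod>i\<in>I. if x \<inter> blk i = \<sigma> y \<inter> blk i then 1 else 0)"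
    using blockwise y by (intro prod.cong) (auto simp: perm_op_def)
  also have "\<dots> = perm_op \<sigma> x y"
    using prod_block_indicator[OF \<open>finite I\<close> cover x] \<open>basis_involution N \<sigma>\<close> y
    by (simp add: perm_op_def basis_involution_def)
  finally show "perm_op \<sigma> x y = (\<Prod>i\<in>I. perm_op (\<lambda>z. \<sigma> z \<inter> blk i) (x \<inter> blk i) (y \<inter> blk i))"
    by simp
qed (use disjoint cover size in auto)

definition cnots :: "nat set \<Rightarrow> (nat \<Rightarrow> nat) \<Rightarrow> nat set \<Rightarrow> nat set" where
  "cnots T c y = {e. (e \<in> y) \<noteq> (e \<in> T \<and> c e \<in> y)}"

lemma basis_involution_cnots:
  "T \<subseteq> {0..<N} \<Longrightarrow> c ` T \<inter> T = {} \<Longrightarrow> basis_involution N (cnots T c)"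
  unfolding basis_involution_def cnots_def by auto

definition cnot_block :: "nat set \<Rightarrow> (nat \<Rightarrow> nat) \<Rightarrow> nat \<Rightarrow> nat set" where
  "cnot_block T c t = (if t \<in> T then {t, c t} else {t})"

lemma cnot_blocks_cover:
  assumes "T \<subseteq> {0..<N}" and "c ` T \<subseteq> {0..<N}" and "c ` T \<inter> T = {}"
  shows "(\<Union>t\<in>{0..<N} - c ` T. cnot_block T c t) = {0..<N}"
proof (intro equalityI subsetI)
  fix e assume e: "e \<in> {0..<N}"
  show "e \<in> (\<Union>t\<in>{0..<N} - c ` T. cnot_block T c t)"
  proof (cases "e \<in> c ` T")
    case True
    then obtain t where "t \<in> T" "e = c t"
      by blast
    with assms(1,3) show ?thesis
      by (intro UN_I[of t]) (auto simp: cnot_block_def)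
  qed (use e in \<open>auto simp: cnot_block_def\<close>)
next
  fix e assume "e \<in> (\<Union>t\<in>{0..<N} - c ` T. cnot_block T c t)"
  then obtain t where "t \<in> {0..<N}" "e = t \<or> t \<in> T \<and> e = c t"
    by (auto simp: cnot_block_def split: if_splits)
  with assms(2) show "e \<in> {0..<N}"
    by auto
qed

lemma is_layer_cnots:
  assumes targets: "T \<subseteq> {0..<N}" and controls: "c ` T \<subseteq> {0..<N}"
    and disjoint: "c ` T \<inter> T = {}" and "inj_on c T"
  shows "is_layer N (perm_op (cnots T c))"
proof (rule is_layer_perm_op[where I = "{0..<N} - c ` T" and blk = "cnot_block T c"])
  show "cnot_block T c i \<inter> cnot_block T c j = {}"
    if i: "i \<in> {0..<N} - c ` T" and j: "j \<in> {0..<N} - c ` T" and "i \<noteq> j" for i j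
  proof -
    have "c i \<noteq> c j" if "i \<in> T" "j \<in> T"
      using \<open>inj_on c T\<close> \<open>i \<noteq> j\<close> that by (auto dest: inj_onD)
    moreover have "i \<noteq> c t" "j \<noteq> c t" if "t \<in> T" for t
      using i j that by auto
    ultimately show ?thesis
      unfolding cnot_block_def using \<open>i \<noteq> j\<close> by auto
  qed
  show "card (cnot_block T c t) = 1 \<or> card (cnot_block T c t) = 2" for t
  proof (cases "t \<in> T")
    case True
    then have "c t \<noteq> t"
      using disjoint by auto
    with True show ?thesis
      by (simp add: cnot_block_def)
  qed (simp add: cnot_block_def)
  show "cnots T c y \<inter> cnot_block T c t = cnots T c (y \<inter> cnot_block T c t) \<inter> cnot_block T c t" for t y
  proof (rule set_eqI)
    fix e
    have "e \<in> T \<Longrightarrow> e \<in> cnot_block T c t \<Longrightarrow> c e \<in> cnot_block T c t"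
      using disjoint by (auto simp: cnot_block_def split: if_splits)
    then show "e \<in> cnots T c y \<inter> cnot_block T c t \<longleftrightarrow> e \<in> cnots T c (y \<inter> cnot_block T c t) \<inter> cnot_block T c t"
      unfolding cnots_def by blast
  qed
  show "basis_involution N (cnots T c)"
    using targets disjoint by (rule basis_involution_cnots)
qed (use cnot_blocks_cover[OF assms(1-3)] in simp_all)

lemma unitary_on_ctrl_gate:
  assumes U: "unitary2 U" and "a \<noteq> t"
  shows "unitary_on {t, a} (ctrl_gate a t U)"
proof -
  have u: "U p False * cnj (U q False) + U p True * cnj (U q True) = (if p = q then 1 else 0)" for p q
    using U unfolding unitary2_def by (simp add: UNIV_bool)
  have pow: "Pow {t, a} = {{}, {t}, {a}, {t, a}}"
    by (auto simp: Pow_insert)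
  have subsets: "x \<subseteq> {t, a} \<longleftrightarrow> x = {} \<or> x = {t} \<or> x = {a} \<or> x = {t, a}" for x
    by auto
  show ?thesis
    unfolding unitary_on_def pow subsets
    using \<open>a \<noteq> t\<close> u[of True True] u[of True False] u[of False True] u[of False False]
    by (auto simp: ctrl_gate_def qid_def insert_commute algebra_simps)
qed

section \<open>The product of the controlled gates\<close>

text \<open>The controlled \<open>U\<^sub>1 \<otimes> \<dots> \<otimes> U\<^sub>k\<close> with control qubit 0.\<close>

definition ctrl_tensor :: "(nat \<Rightarrow> bool \<Rightarrow> bool \<Rightarrow> complex) \<Rightarrow> nat \<Rightarrow> qop" where
  "ctrl_tensor U k x y =
     (if 0 \<in> y then (if x - {1..k} = y - {1..k} then \<Prod>i\<in>{1..k}. U i (i \<in> x) (i \<in> y) else 0)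
      else qid x y)"

lemma ctrl_tensor_step_support:
  assumes "0 \<in> y" and "ctrl_gate 0 (Suc k) V x z * ctrl_tensor U k z y \<noteq> 0"
  shows "z = (x - {Suc k}) \<union> (y \<inter> {Suc k})"
proof -
  have "ctrl_tensor U k z y \<noteq> 0" and gate: "ctrl_gate 0 (Suc k) V x z \<noteq> 0"
    using assms(2) by simp_all
  from this(1) have zy: "z - {1..k} = y - {1..k}"
    using \<open>0 \<in> y\<close> by (cases "z - {1..k} = y - {1..k}") (simp_all add: ctrl_tensor_def)
  have "0 \<in> y - {1..k}"
    using \<open>0 \<in> y\<close> by simp
  then have "0 \<in> z"
    unfolding zy[symmetric] by simp
  with gate have xz: "x - {Suc k} = z - {Suc k}"
    by (cases "x - {Suc k} = z - {Suc k}") (simp_all add: ctrl_gate_def)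
  show ?thesis
  proof (rule set_eqI)
    fix e
    show "e \<in> z \<longleftrightarrow> e \<in> (x - {Suc k}) \<union> (y \<inter> {Suc k})"
    proof (cases "e = Suc k")
      case True
      then have "e \<notin> {1..k}"
        by simp
      then have "e \<in> z \<longleftrightarrow> e \<in> y"
        using zy by (metis Diff_iff)
      then show ?thesis
        using True by simp
    next
      case False
      then show ?thesis
        using xz by auto
    qed
  qed
qed

lemma ctrl_tensor_step_value:
  fixes x y :: "nat set" and k :: nat
  assumes "0 \<in> y"
  defines "z0 \<equiv> (x - {Suc k}) \<union> (y \<inter> {Suc k})"
  shows "ctrl_gate 0 (Suc k) (U (Suc k)) x z0 * ctrl_tensor U k z0 y = ctrl_tensor U (Suc k) x y"
proof -
  have split: "{1..Suc k} = insert (Suc k) {1..k}"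
    by auto
  have "z0 - {1..k} = (x - {1..Suc k}) \<union> (y \<inter> {Suc k})"
    unfolding z0_def split by auto
  moreover have "y - {1..k} = (y - {1..Suc k}) \<union> (y \<inter> {Suc k})"
    unfolding split by auto
  ultimately have cond: "z0 - {1..k} = y - {1..k} \<longleftrightarrow> x - {1..Suc k} = y - {1..Suc k}"
    unfolding split by auto
  show ?thesis
  proof (cases "x - {1..Suc k} = y - {1..Suc k}")
    case True
    have "0 \<in> y - {1..Suc k}"
      using \<open>0 \<in> y\<close> by simp
    then have "0 \<in> x"
      unfolding True[symmetric] by simp
    then have "ctrl_gate 0 (Suc k) (U (Suc k)) x z0 = U (Suc k) (Suc k \<in> x) (Suc k \<in> y)"
      unfolding ctrl_gate_def z0_def by auto
    moreover have "(\<Prod>i\<in>{1..k}. U i (i \<in> z0) (i \<in> y)) = (\<Prod>i\<in>{1..k}. U i (i \<in> x) (i \<in> y))"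
      unfolding z0_def by (intro prod.cong) auto
    then have "ctrl_tensor U k z0 y = (\<Prod>i\<in>{1..k}. U i (i \<in> x) (i \<in> y))"
      unfolding ctrl_tensor_def if_P[OF \<open>0 \<in> y\<close>] if_P[OF cond[THEN iffD2, OF True]] .
    moreover have "ctrl_tensor U (Suc k) x y
        = U (Suc k) (Suc k \<in> x) (Suc k \<in> y) * (\<Prod>i\<in>{1..k}. U i (i \<in> x) (i \<in> y))"
      unfolding ctrl_tensor_def if_P[OF \<open>0 \<in> y\<close>] if_P[OF True] by (simp add: split)
    ultimately show ?thesis
      by simp
  next
    case False
    then have "ctrl_tensor U k z0 y = 0" and "ctrl_tensor U (Suc k) x y = 0"
      unfolding ctrl_tensor_def if_P[OF \<open>0 \<in> y\<close>] using cond by simp_all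
    then show ?thesis
      by simp
  qed
qed

lemma qmult_ctrl_gate_ctrl_tensor:
  assumes "Suc k < N" and "x \<subseteq> {0..<N}" and "y \<subseteq> {0..<N}"
  shows "qmult N (ctrl_gate 0 (Suc k) (U (Suc k))) (ctrl_tensor U k) x y = ctrl_tensor U (Suc k) x y"
proof (cases "0 \<in> y")
  case False
  then have "qmult N (ctrl_gate 0 (Suc k) (U (Suc k))) (ctrl_tensor U k) x y
      = ctrl_gate 0 (Suc k) (U (Suc k)) x y * ctrl_tensor U k y y"
    using assms by (intro qmult_single_term) (auto simp: ctrl_tensor_def qid_def)
  then show ?thesis
    using False by (simp add: ctrl_tensor_def ctrl_gate_def qid_def)
next
  case True
  have "(x - {Suc k}) \<union> (y \<inter> {Suc k}) \<subseteq> {0..<N}"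
    using assms by auto
  then show ?thesis
    using ctrl_tensor_step_support[OF True] ctrl_tensor_step_value[OF True]
    by (subst qmult_single_term) blast+
qed

lemma ctrl_prod_eq_ctrl_tensor:
  "k < N \<Longrightarrow> x \<subseteq> {0..<N} \<Longrightarrow> y \<subseteq> {0..<N} \<Longrightarrow> ctrl_prod N U k x y = ctrl_tensor U k x y"
proof (induction k arbitrary: x y)
  case 0
  then show ?case
    by (simp add: ctrl_tensor_def qid_def)
next
  case (Suc k)
  have "ctrl_prod N U (Suc k) x y = qmult N (ctrl_gate 0 (Suc k) (U (Suc k))) (ctrl_tensor U k) x y"
    unfolding ctrl_prod.simps qmult_def using Suc by (intro sum.cong) auto
  with Suc.prems show ?case
    by (simp add: qmult_ctrl_gate_ctrl_tensor)
qed

section \<open>The layer of controlled gates\<close>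

text \<open>Target \<open>i\<close> is controlled by its own copy \<open>n + i\<close> of the control bit; qubit 0 idles.\<close>

definition pair_block :: "nat \<Rightarrow> nat \<Rightarrow> nat set" where
  "pair_block n i = (if i = 0 then {0} else {i, n + i})"

definition pair_gate :: "nat \<Rightarrow> (nat \<Rightarrow> bool \<Rightarrow> bool \<Rightarrow> complex) \<Rightarrow> nat \<Rightarrow> qop" where
  "pair_gate n U i = (if i = 0 then qid else ctrl_gate (n + i) i (U i))"

definition ctrl_layer :: "nat \<Rightarrow> (nat \<Rightarrow> bool \<Rightarrow> bool \<Rightarrow> complex) \<Rightarrow> qop" where
  "ctrl_layer n U x y = (\<Prod>i\<in>{0..n}. pair_gate n U i (x \<inter> pair_block n i) (y \<inter> pair_block n i))"

lemma pair_blocks_cover: "(\<Union>i\<in>{0..n}. pair_block n i) = {0..<n + 1 + n}"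
proof (intro equalityI subsetI)
  fix e assume e: "e \<in> {0..<n + 1 + n}"
  show "e \<in> (\<Union>i\<in>{0..n}. pair_block n i)"
  proof (cases "e \<le> n")
    case True
    then have "e \<in> pair_block n e"
      by (simp add: pair_block_def)
    with True show ?thesis
      by auto
  next
    case False
    then have "e \<in> pair_block n (e - n)" "e - n \<in> {0..n}"
      using e by (auto simp: pair_block_def)
    then show ?thesis
      by blast
  qed
qed (auto simp: pair_block_def split: if_splits)

lemma is_layer_ctrl_layer:
  assumes "\<forall>i\<in>{1..n}. unitary2 (U i)"
  shows "is_layer (n + 1 + n) (ctrl_layer n U)"
proof (rule is_layerI[where I = "{0..n}" and blk = "pair_block n" and g = "pair_gate n U"])
  show "(\<Union>i\<in>{0..n}. pair_block n i) = {0..<n + 1 + n}"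
    by (rule pair_blocks_cover)
next
  fix i assume "i \<in> {0..n}"
  show "unitary_on (pair_block n i) (pair_gate n U i)"
  proof (cases "i = 0")
    case True
    then show ?thesis
      by (simp add: pair_block_def pair_gate_def qid_eq_perm_op_id unitary_on_perm_op)
  next
    case False
    then show ?thesis
      using assms \<open>i \<in> {0..n}\<close> unitary_on_ctrl_gate[of "U i" "n + i" i]
      by (simp add: pair_block_def pair_gate_def)
  qed
qed (auto simp: pair_block_def ctrl_layer_def)

lemma ctrl_layer_idle:
  assumes "u \<subseteq> {0..<n + 1 + n}" and "y \<subseteq> {0..n}" and "0 \<notin> y"
  shows "ctrl_layer n U u y = (if u = y then 1 else 0)"
proof -
  have "ctrl_layer n U u y = (\<Prod>i\<in>{0..n}. if u \<inter> pair_block n i = y \<inter> pair_block n i then 1 else 0)"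
    unfolding ctrl_layer_def
  proof (rule prod.cong)
    fix i assume "i \<in> {0..n}"
    have "n + i \<notin> y \<or> i = 0"
      using assms(2) by (auto simp: subset_iff)
    then show "pair_gate n U i (u \<inter> pair_block n i) (y \<inter> pair_block n i)
        = (if u \<inter> pair_block n i = y \<inter> pair_block n i then 1 else 0)"
      by (auto simp: pair_gate_def ctrl_gate_def qid_def pair_block_def)
  qed simp
  also have "\<dots> = (if u = y then 1 else 0)"
    using assms by (intro prod_block_indicator[OF _ pair_blocks_cover]) (auto simp: subset_iff)
  finally show ?thesis .
qed

lemma ctrl_layer_active:
  assumes "y \<subseteq> {0..n}" and "0 \<in> y"
  shows "ctrl_layer n U u (y \<union> {n<..2 * n}) =
    (if 0 \<in> u \<and> {n<..2 * n} \<subseteq> u then \<Prod>i\<in>{1..n}. U i (i \<in> u) (i \<in> y) else 0)"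
proof -
  have "{0..n} = insert 0 {1..n}"
    by auto
  moreover have "pair_gate n U i (u \<inter> pair_block n i) ((y \<union> {n<..2 * n}) \<inter> pair_block n i)
      = (if n + i \<in> u then U i (i \<in> u) (i \<in> y) else 0)" if "i \<in> {1..n}" for i
  proof -
    have "(y \<union> {n<..2 * n}) \<inter> {i, n + i} - {i} = {n + i}"
      using that by auto
    moreover have "u \<inter> {i, n + i} - {i} = {n + i} \<longleftrightarrow> n + i \<in> u"
      using that by auto
    ultimately show ?thesis
      using that by (simp add: pair_gate_def pair_block_def ctrl_gate_def)
  qed
  moreover have "pair_gate n U 0 (u \<inter> pair_block n 0) ((y \<union> {n<..2 * n}) \<inter> pair_block n 0)
      = (if 0 \<in> u then 1 else 0)"
    using assms(2) by (auto simp: pair_gate_def pair_block_def qid_def)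
  ultimately have "ctrl_layer n U u (y \<union> {n<..2 * n})
      = (if 0 \<in> u then 1 else 0) * (\<Prod>i\<in>{1..n}. if n + i \<in> u then U i (i \<in> u) (i \<in> y) else 0)"
    unfolding ctrl_layer_def by simp
  also have "\<dots> = (if 0 \<in> u \<and> {n<..2 * n} \<subseteq> u then \<Prod>i\<in>{1..n}. U i (i \<in> u) (i \<in> y) else 0)"
  proof (cases "{n<..2 * n} \<subseteq> u")
    case True
    then have "n + i \<in> u" if "i \<in> {1..n}" for i
      using that by auto
    then show ?thesis
      using True by (auto intro!: prod.cong)
  next
    case False
    then obtain e where "e \<in> {n<..2 * n}" "e \<notin> u"
      by blast
    then have "e - n \<in> {1..n}" "n + (e - n) \<notin> u"
      by auto
    then have "(\<Prod>i\<in>{1..n}. if n + i \<in> u then U i (i \<in> u) (i \<in> y) else 0) = 0"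
      by (intro prod_zero) auto
    then show ?thesis
      using False by simp
  qed
  finally show ?thesis .
qed

section \<open>Conjugation by basis permutations\<close>

lemma qmult_perm_op_left:
  assumes "basis_involution N \<sigma>" and "x \<subseteq> {0..<N}"
  shows "qmult N (perm_op \<sigma>) B x y = B (\<sigma> x) y"
proof -
  have "qmult N (perm_op \<sigma>) B x y = perm_op \<sigma> x (\<sigma> x) * B (\<sigma> x) y"
    using assms by (intro qmult_single_term) (auto simp: basis_involution_def perm_op_def)
  then show ?thesis
    using assms by (simp add: basis_involution_def perm_op_def)
qed

lemma fold_involutions_subset:
  "\<forall>\<sigma>\<in>set ss. basis_involution N \<sigma> \<Longrightarrow> x \<subseteq> {0..<N} \<Longrightarrow> fold id ss x \<subseteq> {0..<N}"
  by (induction ss arbitrary: x) (auto simp: basis_involution_def)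

lemma fold_rev_involutions:
  "\<forall>\<sigma>\<in>set ss. basis_involution N \<sigma> \<Longrightarrow> fold id (rev ss) (fold id ss x) = x"
  by (induction ss arbitrary: x) (auto simp: basis_involution_def)

lemma foldr_qmult_perm_ops:
  "\<forall>\<sigma>\<in>set ss. basis_involution N \<sigma> \<Longrightarrow> x \<subseteq> {0..<N} \<Longrightarrow>
    foldr (qmult N) (map perm_op ss @ Ls) qid x y = foldr (qmult N) Ls qid (fold id ss x) y"
proof (induction ss arbitrary: x)
  case (Cons \<sigma> ss)
  then have "\<sigma> x \<subseteq> {0..<N}"
    by (simp add: basis_involution_def)
  with Cons show ?case
    by (simp add: qmult_perm_op_left)
qed simp

lemma foldr_qmult_conjugate:
  assumes involutions: "\<forall>\<sigma>\<in>set ss. basis_involution N \<sigma>"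
    and "x \<subseteq> {0..<N}" and "y \<subseteq> {0..<N}"
  shows "foldr (qmult N) (map perm_op ss @ C # rev (map perm_op ss)) qid x y
    = C (fold id ss x) (fold id ss y)"
proof -
  have undo: "foldr (qmult N) (rev (map perm_op ss)) qid z y = (if z = fold id ss y then 1 else 0)"
    if "z \<subseteq> {0..<N}" for z
  proof -
    have "foldr (qmult N) (rev (map perm_op ss)) qid z y = qid (fold id (rev ss) z) y"
      using foldr_qmult_perm_ops[of "rev ss" N z "[]"] involutions that by (simp add: rev_map)
    moreover have "fold id (rev ss) z = y \<longleftrightarrow> z = fold id ss y"
      using fold_rev_involutions[of ss N] fold_rev_involutions[of "rev ss" N] involutions by auto
    ultimately show ?thesis
      by (simp add: qid_def)
  qed
  have "foldr (qmult N) (map perm_op ss @ C # rev (map perm_op ss)) qid x y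
      = qmult N C (foldr (qmult N) (rev (map perm_op ss)) qid) (fold id ss x) y"
    using foldr_qmult_perm_ops[OF involutions \<open>x \<subseteq> {0..<N}\<close>, of "C # rev (map perm_op ss)" y]
    by simp
  also have "\<dots> = C (fold id ss x) (fold id ss y)"
    using undo fold_involutions_subset[OF involutions \<open>y \<subseteq> {0..<N}\<close>]
    by (subst qmult_single_term[where w = "fold id ss y"]) auto
  finally show ?thesis .
qed

section \<open>The fan-out circuit\<close>

text \<open>Round \<open>j\<close> copies qubit 0 into ancilla \<open>n + 2^j\<close> and ancilla \<open>n + k\<close> into
  \<open>n + 2^j + k\<close> for \<open>0 < k < 2^j\<close>, ignoring ancillas beyond \<open>2 * n\<close>; afterwards the ancillas
  \<open>n + 1, \<dots>, n + 2^(j+1) - 1\<close> hold copies of the control bit.\<close>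

definition fanout_targets :: "nat \<Rightarrow> nat \<Rightarrow> nat set" where
  "fanout_targets n j = {n + 2^j..<n + 2 * 2^j} \<inter> {..2 * n}"

definition fanout_source :: "nat \<Rightarrow> nat \<Rightarrow> nat \<Rightarrow> nat" where
  "fanout_source n j e = (if e = n + 2^j then 0 else e - 2^j)"

definition fanout_round :: "nat \<Rightarrow> nat \<Rightarrow> nat set \<Rightarrow> nat set" where
  "fanout_round n j = cnots (fanout_targets n j) (fanout_source n j)"

definition fanout_copies :: "nat \<Rightarrow> nat \<Rightarrow> nat set \<Rightarrow> nat set" where
  "fanout_copies n j w = w \<union> (if 0 \<in> w then {n<..<n + 2^j} \<inter> {..2 * n} else {})"

lemma fanout_source_disjoint: "fanout_source n j ` fanout_targets n j \<inter> fanout_targets n j = {}"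
  by (auto simp: fanout_source_def fanout_targets_def)

lemma is_layer_fanout_round: "is_layer (n + 1 + n) (perm_op (fanout_round n j))"
  unfolding fanout_round_def
proof (rule is_layer_cnots[OF _ _ fanout_source_disjoint])
  show "inj_on (fanout_source n j) (fanout_targets n j)"
    by (rule inj_onI) (auto simp: fanout_source_def fanout_targets_def split: if_splits)
qed (auto simp: fanout_source_def fanout_targets_def)

lemma basis_involution_fanout_round: "basis_involution (n + 1 + n) (fanout_round n j)"
  unfolding fanout_round_def
  by (rule basis_involution_cnots[OF _ fanout_source_disjoint]) (auto simp: fanout_targets_def)

lemma fanout_round_copies:
  assumes "w \<subseteq> {0..n}"
  shows "fanout_round n j (fanout_copies n j w) = fanout_copies n (Suc j) w"
proof (rule set_eqI)
  fix e
  show "e \<in> fanout_round n j (fanout_copies n j w) \<longleftrightarrow> e \<in> fanout_copies n (Suc j) w"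
  proof (cases "e \<in> fanout_targets n j")
    case True
    then have e: "n + 2^j \<le> e" "e < n + 2 * 2^j" "e \<le> 2 * n"
      by (auto simp: fanout_targets_def)
    have "fanout_source n j e \<in> fanout_copies n j w \<longleftrightarrow> 0 \<in> w"
    proof (cases "e = n + 2^j")
      case False
      then have "n < e - 2^j" "e - 2^j < n + 2^j"
        using e by auto
      with False e assms show ?thesis
        by (auto simp: fanout_source_def fanout_copies_def)
    qed (auto simp: fanout_source_def fanout_copies_def)
    with True e assms show ?thesis
      by (auto simp: fanout_round_def cnots_def fanout_copies_def)
  next
    case False
    then have "e \<in> fanout_copies n (Suc j) w \<longleftrightarrow> e \<in> fanout_copies n j w"
      by (auto simp: fanout_copies_def fanout_targets_def)
    with False show ?thesis
      by (simp add: fanout_round_def cnots_def)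
  qed
qed

definition fanout :: "nat \<Rightarrow> nat \<Rightarrow> (nat set \<Rightarrow> nat set) list" where
  "fanout n J = map (fanout_round n) [0..<J]"

lemma fanout_involutions: "\<forall>\<sigma>\<in>set (fanout n J). basis_involution (n + 1 + n) \<sigma>"
proof
  fix \<sigma> assume "\<sigma> \<in> set (fanout n J)"
  then obtain j where "\<sigma> = fanout_round n j"
    by (auto simp: fanout_def)
  then show "basis_involution (n + 1 + n) \<sigma>"
    by (simp only: basis_involution_fanout_round)
qed

lemma fold_fanout:
  assumes "n < 2^J" and "w \<subseteq> {0..n}"
  shows "fold id (fanout n J) w = w \<union> (if 0 \<in> w then {n<..2 * n} else {})"
proof -
  have "fold id (fanout n j) w = fanout_copies n j w" for j
  proof (induction j)
    case 0
    show ?case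
      by (auto simp: fanout_def fanout_copies_def)
  next
    case (Suc j)
    have "fanout n (Suc j) = fanout n j @ [fanout_round n j]"
      by (simp add: fanout_def)
    then show ?case
      using Suc fanout_round_copies[OF assms(2)] by simp
  qed
  moreover have "{n<..<n + 2^J} \<inter> {..2 * n} = {n<..2 * n}"
    using assms(1) by auto
  ultimately show ?thesis
    by (simp add: fanout_copies_def)
qed

definition fanout_circuit :: "nat \<Rightarrow> nat \<Rightarrow> (nat \<Rightarrow> bool \<Rightarrow> bool \<Rightarrow> complex) \<Rightarrow> qop" where
  "fanout_circuit n J U = foldr (qmult (n + 1 + n))
     (map perm_op (fanout n J) @ ctrl_layer n U # rev (map perm_op (fanout n J))) qid"

lemma circuit_fanout_circuit:
  assumes "\<forall>i\<in>{1..n}. unitary2 (U i)"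
  shows "circuit (n + 1 + n) (2 * J + 1) (fanout_circuit n J U)"
proof -
  let ?layers = "map perm_op (fanout n J) @ ctrl_layer n U # rev (map perm_op (fanout n J))"
  have "\<forall>L\<in>set ?layers. is_layer (n + 1 + n) L"
    using is_layer_fanout_round is_layer_ctrl_layer[OF assms] by (auto simp: fanout_def)
  moreover have "length ?layers = 2 * J + 1"
    by (simp add: fanout_def)
  ultimately show ?thesis
    unfolding fanout_circuit_def by (metis circuit_foldr_qmult)
qed

lemma fanout_circuit_apply:
  assumes "x \<subseteq> {0..<n + 1 + n}" and "y \<subseteq> {0..<n + 1 + n}"
  shows "fanout_circuit n J U x y = ctrl_layer n U (fold id (fanout n J) x) (fold id (fanout n J) y)"
  unfolding fanout_circuit_def using foldr_qmult_conjugate[OF fanout_involutions assms] .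

lemma inj_fold_fanout: "inj (fold id (fanout n J))"
  by (metis fold_rev_involutions[OF fanout_involutions] injI)

lemma fanout_circuit_idle_column:
  assumes "n < 2^J" and "x \<subseteq> {0..<n + 1 + n}" and "y \<subseteq> {0..n}" and "0 \<notin> y"
  shows "fanout_circuit n J U x y = (if x = y then 1 else 0)"
proof -
  let ?\<sigma> = "fold id (fanout n J)"
  have "?\<sigma> y = y"
    using fold_fanout[OF assms(1,3)] assms(4) by simp
  moreover have "?\<sigma> x \<subseteq> {0..<n + 1 + n}"
    using fold_involutions_subset[OF fanout_involutions assms(2)] .
  moreover have "fanout_circuit n J U x y = ctrl_layer n U (?\<sigma> x) (?\<sigma> y)"
    using assms by (intro fanout_circuit_apply) auto
  ultimately have "fanout_circuit n J U x y = (if ?\<sigma> x = ?\<sigma> y then 1 else 0)"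
    using ctrl_layer_idle assms(3,4) by simp
  then show ?thesis
    using inj_fold_fanout by (simp add: inj_eq)
qed

lemma fold_fanout_full_copies:
  assumes "n < 2^J" and x: "x \<subseteq> {0..<n + 1 + n}"
    and copies: "0 \<in> fold id (fanout n J) x" "{n<..2 * n} \<subseteq> fold id (fanout n J) x"
  shows "0 \<in> x \<and> x \<subseteq> {0..n}"
proof -
  let ?\<sigma> = "fold id (fanout n J)"
  define w where "w = ?\<sigma> x \<inter> {0..n}"
  have w: "w \<subseteq> {0..n}" "0 \<in> w"
    using copies by (auto simp: w_def)
  then have "?\<sigma> w = w \<union> {n<..2 * n}"
    using fold_fanout[OF assms(1)] by simp
  also have "\<dots> = ?\<sigma> x"
    using copies fold_involutions_subset[OF fanout_involutions[of n J] x] by (auto simp: w_def)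
  finally have "x = w"
    using inj_fold_fanout by (simp add: inj_eq)
  with w show ?thesis
    by simp
qed

lemma fanout_circuit_active_column:
  assumes "n < 2^J" and x: "x \<subseteq> {0..<n + 1 + n}" and y: "y \<subseteq> {0..n}" and "0 \<in> y"
  shows "fanout_circuit n J U x y
    = (if 0 \<in> x \<and> x \<subseteq> {0..n} then \<Prod>i\<in>{1..n}. U i (i \<in> x) (i \<in> y) else 0)"
proof -
  define \<sigma> where "\<sigma> = fold id (fanout n J)"
  have \<sigma>_small: "\<sigma> w = w \<union> (if 0 \<in> w then {n<..2 * n} else {})" if "w \<subseteq> {0..n}" for w
    unfolding \<sigma>_def using fold_fanout[OF assms(1) that] .
  have "\<sigma> y = y \<union> {n<..2 * n}"
    using \<sigma>_small[OF y] \<open>0 \<in> y\<close> by simp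
  moreover have "y \<subseteq> {0..<n + 1 + n}"
    using y by auto
  then have "fanout_circuit n J U x y = ctrl_layer n U (\<sigma> x) (\<sigma> y)"
    unfolding \<sigma>_def by (rule fanout_circuit_apply[OF x])
  ultimately have "fanout_circuit n J U x y = ctrl_layer n U (\<sigma> x) (y \<union> {n<..2 * n})"
    by simp
  also have "\<dots> = (if 0 \<in> \<sigma> x \<and> {n<..2 * n} \<subseteq> \<sigma> x then \<Prod>i\<in>{1..n}. U i (i \<in> \<sigma> x) (i \<in> y) else 0)"
    by (rule ctrl_layer_active[OF y \<open>0 \<in> y\<close>])
  also have "\<dots> = (if 0 \<in> x \<and> x \<subseteq> {0..n} then \<Prod>i\<in>{1..n}. U i (i \<in> x) (i \<in> y) else 0)"
  proof (cases "0 \<in> x \<and> x \<subseteq> {0..n}")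
    case True
    then have \<sigma>x: "\<sigma> x = x \<union> {n<..2 * n}"
      using \<sigma>_small by simp
    have "(\<Prod>i\<in>{1..n}. U i (i \<in> \<sigma> x) (i \<in> y)) = (\<Prod>i\<in>{1..n}. U i (i \<in> x) (i \<in> y))"
      unfolding \<sigma>x by (intro prod.cong) auto
    with True show ?thesis
      by (simp add: \<sigma>x)
  next
    case False
    then have "\<not> (0 \<in> \<sigma> x \<and> {n<..2 * n} \<subseteq> \<sigma> x)"
      using fold_fanout_full_copies[OF assms(1) x] unfolding \<sigma>_def by blast
    with False show ?thesis
      by (simp only: if_False)
  qed
  finally show ?thesis .
qed

lemma embeds_fanout_circuit:
  assumes "n < 2^J"
  shows "embeds (n + 1) n (ctrl_prod (n + 1) U n) (fanout_circuit n J U)"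
  unfolding embeds_def
proof (intro allI impI)
  fix x y assume x: "x \<subseteq> {0..<n + 1 + n}" and y: "y \<subseteq> {0..<n + 1}"
  have "y \<subseteq> {0..n}"
    using y by auto
  have target: "ctrl_prod (n + 1) U n x y = ctrl_tensor U n x y" if "x \<subseteq> {0..<n + 1}"
    using that y by (intro ctrl_prod_eq_ctrl_tensor) auto
  show "fanout_circuit n J U x y = (if x \<subseteq> {0..<n + 1} then ctrl_prod (n + 1) U n x y else 0)"
  proof (cases "0 \<in> y")
    case False
    then show ?thesis
      using fanout_circuit_idle_column[OF assms x \<open>y \<subseteq> {0..n}\<close>] target y
      by (auto simp: ctrl_tensor_def qid_def)
  next
    case True
    have "fanout_circuit n J U x y
        = (if 0 \<in> x \<and> x \<subseteq> {0..n} then \<Prod>i\<in>{1..n}. U i (i \<in> x) (i \<in> y) else 0)"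
      by (rule fanout_circuit_active_column[OF assms x \<open>y \<subseteq> {0..n}\<close> True])
    also have "\<dots> = (if x \<subseteq> {0..<n + 1} then ctrl_tensor U n x y else 0)"
    proof (cases "x \<subseteq> {0..<n + 1}")
      case True
      have "y - {1..n} = {0}"
        using \<open>0 \<in> y\<close> y by (auto simp: subset_iff)
      moreover have "x - {1..n} = (if 0 \<in> x then {0} else {})"
        using True by (auto simp: subset_iff Suc_le_eq) (metis gr0I)+
      moreover have "x \<subseteq> {0..n}"
        using True by (simp add: atLeastLessThanSuc_atLeastAtMost)
      ultimately show ?thesis
        using True \<open>0 \<in> y\<close> by (simp add: ctrl_tensor_def)
    next
      case False
      then have "\<not> x \<subseteq> {0..n}"
        by (simp add: atLeastLessThanSuc_atLeastAtMost)
      with False show ?thesis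
        by simp
    qed
    also have "\<dots> = (if x \<subseteq> {0..<n + 1} then ctrl_prod (n + 1) U n x y else 0)"
      using target by simp
    finally show ?thesis .
  qed
qed

lemma fanout_depth_bound:
  assumes "n \<ge> 2"
  shows "real (2 * Suc (floor_log n) + 1) \<le> 5 * log 2 (real n)"
proof -
  have "real (floor_log n) \<le> log 2 (real n)"
    using assms by (simp add: floor_log_altdef)
  moreover have "1 \<le> log 2 (real n)"
    using assms by simp
  ultimately show ?thesis
    by simp
qed

theorem proposition2:
  shows "\<exists>c::real. c > 0 \<and>
    (\<forall>n::nat. n \<ge> 1 \<longrightarrow>
      (\<forall>U :: nat \<Rightarrow> bool \<Rightarrow> bool \<Rightarrow> complex. (\<forall>i\<in>{1..n}. unitary2 (U i)) \<longrightarrow>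
        (\<exists>m k M. real m \<le> c * real n \<and> (n \<ge> 2 \<longrightarrow> real k \<le> c * log 2 (real n)) \<and>
           circuit (n + 1 + m) k M \<and> embeds (n + 1) m (ctrl_prod (n + 1) U n) M)))"
proof (rule exI[of _ 5], intro conjI allI impI)
  fix n :: nat and U :: "nat \<Rightarrow> bool \<Rightarrow> bool \<Rightarrow> complex"
  assume "n \<ge> 1" and unitary: "\<forall>i\<in>{1..n}. unitary2 (U i)"
  define J where "J = Suc (floor_log n)"
  have "n < 2^J"
    using floor_log_exp2_gt[of n] by (simp add: J_def)
  show "\<exists>m k M. real m \<le> 5 * real n \<and> (n \<ge> 2 \<longrightarrow> real k \<le> 5 * log 2 (real n)) \<and>
      circuit (n + 1 + m) k M \<and> embeds (n + 1) m (ctrl_prod (n + 1) U n) M"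
  proof (intro exI conjI impI)
    show "real n \<le> 5 * real n"
      by simp
    show "real (2 * J + 1) \<le> 5 * log 2 (real n)" if "n \<ge> 2"
      using fanout_depth_bound[OF that] by (simp add: J_def)
    show "circuit (n + 1 + n) (2 * J + 1) (fanout_circuit n J U)"
      by (rule circuit_fanout_circuit[OF unitary])
    show "embeds (n + 1) n (ctrl_prod (n + 1) U n) (fanout_circuit n J U)"
      by (rule embeds_fanout_circuit[OF \<open>n < 2^J\<close>])
  qed
qed simp

end
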